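(* For every $\varphi\in\mathbb{R}$, let $|\varphi\rangle = P(\varphi)|+\rangle = (|0\rangle + e^{i\varphi}|1\rangle)/\sqrt{2}$. Then $$C\bigl(|\varphi\rangle\langle\varphi|\bigr) = \frac{|\sin\varphi| + |\cos\varphi| - 1}{2}.$$
   Context: Single-qubit phase-point operators: for $q,p\in\{0,1\}$, $A_{(q,p)} = \tfrac12\bigl(I + (-1)^p X + (-1)^{q+p} Y + (-1)^q Z\bigr)$, where $X,Y,Z$ are the Pauli matrices. The Wigner function of a single-qubit density matrix $\rho$ is the vector $W_\rho\in\mathbb{R}^4$ with entries $W_\rho(q,p) = \tfrac12\operatorname{tr}(\rho A_{(q,p)})$. The single-qubit stabilizer states are the six pure states $|0\rangle,|1\rangle,|\pm\rangle=(|0\rangle\pm|1\rangle)/\sqrt2,|\pm i\rangle=(|0\rangle\pm i|1\rangle)/\sqrt2$. The stabilizer polytope $\mathcal{W}_{\mathrm{free}}\subset\mathbb{R}^4$ is the convex hull of the Wigner vectors of the stabilizer states. The Wigner distance of $\rho$ is $C(\rho) = \min_{f\in\mathcal{W}_{\mathrm{free}}} \|W_\rho - f\|_1$, with $\|\cdot\|_1$ the $\ell^1$ norm on $\mathbb{R}^4$. The phase gate is $P(\varphi) = \mathrm{diag}(1, e^{i\varphi})$. *)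

theory Defs
  imports "HOL-Analysis.Analysis"
begin

text \<open>Wigner vectors live in real^4 with coordinates ordered
(q,p) = (0,0),(0,1),(1,0),(1,1).\<close>

definition pauliX :: "complex^2^2" where
  "pauliX = vector [vector [0, 1], vector [1, 0]]"
definition pauliY :: "complex^2^2" where
  "pauliY = vector [vector [0, - \<i>], vector [\<i>, 0]]"
definition pauliZ :: "complex^2^2" where
  "pauliZ = vector [vector [1, 0], vector [0, -1]]"

definition phase_point :: "nat \<Rightarrow> nat \<Rightarrow> complex^2^2" where
  "phase_point q p = (\<chi> i j. (1/2) * ((mat 1 :: complex^2^2) $ i $ j
      + (-1) ^ p * pauliX $ i $ j
      + (-1) ^ (q + p) * pauliY $ i $ j
      + (-1) ^ q * pauliZ $ i $ j))"

text \<open>Wigner function W(q,p) = 1/2 tr(rho A_(q,p)) (real, since rho and A are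
Hermitian; we take the real part).\<close>
definition wigner_entry :: "complex^2^2 \<Rightarrow> nat \<Rightarrow> nat \<Rightarrow> real" where
  "wigner_entry \<rho> q p = Re (trace (\<rho> ** phase_point q p)) / 2"

definition wigner :: "complex^2^2 \<Rightarrow> real^4" where
  "wigner \<rho> = vector [wigner_entry \<rho> 0 0, wigner_entry \<rho> 0 1,
                       wigner_entry \<rho> 1 0, wigner_entry \<rho> 1 1]"

definition proj :: "complex^2 \<Rightarrow> complex^2^2" where
  "proj \<psi> = (\<chi> i j. \<psi> $ i * cnj (\<psi> $ j))"

definition ket0 :: "complex^2" where "ket0 = vector [1, 0]"
definition ket1 :: "complex^2" where "ket1 = vector [0, 1]"
definition ketplus :: "complex^2" where
  "ketplus = vector [1 / sqrt 2, 1 / sqrt 2]"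
definition ketminus :: "complex^2" where
  "ketminus = vector [1 / sqrt 2, - 1 / sqrt 2]"
definition ketplusi :: "complex^2" where
  "ketplusi = vector [1 / sqrt 2, \<i> / sqrt 2]"
definition ketminusi :: "complex^2" where
  "ketminusi = vector [1 / sqrt 2, - \<i> / sqrt 2]"

definition stabilizer_states :: "(complex^2) set" where
  "stabilizer_states = {ket0, ket1, ketplus, ketminus, ketplusi, ketminusi}"

definition W_free :: "(real^4) set" where
  "W_free = convex hull ((\<lambda>\<psi>. wigner (proj \<psi>)) ` stabilizer_states)"

definition l1norm :: "real^4 \<Rightarrow> real" where
  "l1norm v = (\<Sum>i\<in>UNIV. \<bar>v $ i\<bar>)"

text \<open>Wigner distance: the minimum (attained, the polytope being compact) of
the l1 distance to W_free, written as an infimum.\<close>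
definition wigner_distance :: "complex^2^2 \<Rightarrow> real" where
  "wigner_distance \<rho> = Inf {l1norm (wigner \<rho> - f) | f. f \<in> W_free}"

definition phase_gate :: "real \<Rightarrow> complex^2^2" where
  "phase_gate \<phi> = vector [vector [1, 0], vector [0, cis \<phi>]]"

end

theory Submission
  imports Defs
begin

text \<open>The Wigner vector of |\<phi>\<rangle> is that of the Bloch vector (cos \<phi>, sin \<phi>, 0); its largest
entry is (1 + |cos \<phi>| + |sin \<phi>|) / 4. Every point of the stabilizer polytope has entries
summing to 1 and bounded by 1/2, and for two vectors with equal entry sums the l1 distance is
at least twice the excess of any single entry, giving the lower bound
2 ((1 + |cos \<phi>| + |sin \<phi>|) / 4 - 1/2). On vectors with Bloch vectors (x, y, z) and (x', y', z)
the l1 distance is max |x - x'| |y - y'|, so a suitable convex combination of the Wigner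
vectors of an X- and a Y-eigenstate attains the bound.\<close>

text \<open>The Wigner vector of the qubit operator (I + x X + y Y + z Z) / 2 with Bloch vector (x, y, z).\<close>

definition wigner_of_bloch :: "real \<Rightarrow> real \<Rightarrow> real \<Rightarrow> real^4" where
  "wigner_of_bloch x y z =
     vector [(1 + x + y + z) / 4, (1 - x - y + z) / 4, (1 + x - y - z) / 4, (1 - x + y - z) / 4]"

lemma vector_4_nth [simp]:
  "(vector [a, b, c, d] :: 'a::zero^4) $ 1 = a"
  "(vector [a, b, c, d] :: 'a::zero^4) $ 2 = b"
  "(vector [a, b, c, d] :: 'a::zero^4) $ 3 = c"
  "(vector [a, b, c, d] :: 'a::zero^4) $ 4 = d"
  unfolding vector_def by simp_all

lemma wigner_entry_proj_vector:
  "wigner_entry (proj (vector [a, b])) q p =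
     ((cmod a)\<^sup>2 + (cmod b)\<^sup>2 + (-1) ^ q * ((cmod a)\<^sup>2 - (cmod b)\<^sup>2)
      + 2 * (-1) ^ p * Re (a * cnj b) - 2 * (-1) ^ (q + p) * Im (a * cnj b)) / 4"
  unfolding wigner_entry_def proj_def phase_point_def trace_def matrix_matrix_mult_def
    pauliX_def pauliY_def pauliZ_def cmod_power2
  by (simp add: sum_2 mat_def field_simps power2_eq_square)

lemma wigner_proj_vector:
  assumes "(cmod a)\<^sup>2 + (cmod b)\<^sup>2 = 1"
  shows "wigner (proj (vector [a, b]))
           = wigner_of_bloch (2 * Re (a * cnj b)) (- 2 * Im (a * cnj b)) ((cmod a)\<^sup>2 - (cmod b)\<^sup>2)"
  using assms unfolding wigner_def wigner_of_bloch_def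
  by (simp add: wigner_entry_proj_vector algebra_simps)

lemma sum_wigner_of_bloch: "(\<Sum>i\<in>UNIV. wigner_of_bloch x y z $ i) = 1"
  by (simp add: wigner_of_bloch_def sum_4 field_simps)

lemma convex_sum_one_le:
  "convex {f :: real^'n. (\<Sum>i\<in>UNIV. f $ i) = 1 \<and> (\<forall>i. f $ i \<le> b)}"
  unfolding convex_def
  by (auto simp: sum.distrib simp flip: sum_distrib_left intro: convex_bound_le)

lemma l1norm_wigner_of_bloch_diff:
  "l1norm (wigner_of_bloch x y z - wigner_of_bloch x' y' z) = max \<bar>x - x'\<bar> \<bar>y - y'\<bar>"
  unfolding l1norm_def wigner_of_bloch_def by (simp add: sum_4 max_def abs_if field_simps)

lemma sum_abs_diff_ge_twice_excess:
  fixes v f :: "real^'n"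
  assumes "(\<Sum>j\<in>UNIV. v $ j) = (\<Sum>j\<in>UNIV. f $ j)" and "f $ i \<le> b"
  shows "2 * (v $ i - b) \<le> (\<Sum>j\<in>UNIV. \<bar>v $ j - f $ j\<bar>)"
proof -
  have rest: "(\<Sum>j\<in>UNIV - {i}. v $ j - f $ j) = - (v $ i - f $ i)"
    using assms(1) by (simp add: sum.remove[of UNIV i] sum_subtractf)
  have "2 * (v $ i - b) \<le> \<bar>v $ i - f $ i\<bar> + \<bar>\<Sum>j\<in>UNIV - {i}. v $ j - f $ j\<bar>"
    using assms(2) unfolding rest by (simp split: abs_split)
  also have "\<dots> \<le> \<bar>v $ i - f $ i\<bar> + (\<Sum>j\<in>UNIV - {i}. \<bar>v $ j - f $ j\<bar>)"
    by (simp add: sum_abs)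
  also have "\<dots> = (\<Sum>j\<in>UNIV. \<bar>v $ j - f $ j\<bar>)"
    by (simp add: sum.remove[of UNIV i])
  finally show ?thesis .
qed

lemma wigner_stabilizer_states:
  "(\<lambda>\<psi>. wigner (proj \<psi>)) ` stabilizer_states =
     {wigner_of_bloch 0 0 1, wigner_of_bloch 0 0 (-1), wigner_of_bloch 1 0 0,
      wigner_of_bloch (-1) 0 0, wigner_of_bloch 0 1 0, wigner_of_bloch 0 (-1) 0}"
  by (simp add: stabilizer_states_def ket0_def ket1_def ketplus_def ketminus_def ketplusi_def
      ketminusi_def wigner_proj_vector norm_divide power_divide)

lemma W_free_subset_sum_one_le_half:
  "W_free \<subseteq> {f. (\<Sum>i\<in>UNIV. f $ i) = 1 \<and> (\<forall>i. f $ i \<le> 1/2)}"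
  unfolding W_free_def wigner_stabilizer_states
  by (rule hull_minimal[where S = convex, OF _ convex_sum_one_le])
    (auto simp: wigner_of_bloch_def sum_4 forall_4)

lemma wigner_of_bloch_affine_combination:
  assumes "u + v = 1"
  shows "u *\<^sub>R wigner_of_bloch x y z + v *\<^sub>R wigner_of_bloch x' y' z'
           = wigner_of_bloch (u * x + v * x') (u * y + v * y') (u * z + v * z')"
  using assms unfolding wigner_of_bloch_def by (simp add: vec_eq_iff forall_4 field_simps)

lemma wigner_of_bloch_max_entry: "\<exists>i. wigner_of_bloch x y 0 $ i = (1 + \<bar>x\<bar> + \<bar>y\<bar>) / 4"
proof (cases "0 \<le> x"; cases "0 \<le> y")
  assume "0 \<le> x" "0 \<le> y"
  then show ?thesis by (intro exI[of _ 1]) (simp add: wigner_of_bloch_def)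
next
  assume "0 \<le> x" "\<not> 0 \<le> y"
  then show ?thesis by (intro exI[of _ 3]) (simp add: wigner_of_bloch_def)
next
  assume "\<not> 0 \<le> x" "0 \<le> y"
  then show ?thesis by (intro exI[of _ 4]) (simp add: wigner_of_bloch_def)
next
  assume "\<not> 0 \<le> x" "\<not> 0 \<le> y"
  then show ?thesis by (intro exI[of _ 2]) (simp add: wigner_of_bloch_def)
qed

lemma l1norm_wigner_of_bloch_minus_W_free_ge:
  assumes "f \<in> W_free"
  shows "(\<bar>x\<bar> + \<bar>y\<bar> - 1) / 2 \<le> l1norm (wigner_of_bloch x y 0 - f)"
proof -
  obtain i where i: "wigner_of_bloch x y 0 $ i = (1 + \<bar>x\<bar> + \<bar>y\<bar>) / 4"
    using wigner_of_bloch_max_entry by blast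
  have "(\<Sum>j\<in>UNIV. f $ j) = 1" "f $ i \<le> 1/2"
    using assms W_free_subset_sum_one_le_half by auto
  then have "2 * (wigner_of_bloch x y 0 $ i - 1/2) \<le> l1norm (wigner_of_bloch x y 0 - f)"
    unfolding l1norm_def vector_minus_component
    by (intro sum_abs_diff_ge_twice_excess) (simp_all add: sum_wigner_of_bloch)
  then show ?thesis unfolding i by argo
qed

lemma W_free_attains_equatorial_distance:
  assumes "\<bar>x\<bar> \<le> 1" "\<bar>y\<bar> \<le> 1" "1 \<le> \<bar>x\<bar> + \<bar>y\<bar>"
  obtains g where "g \<in> W_free" "l1norm (wigner_of_bloch x y 0 - g) = (\<bar>x\<bar> + \<bar>y\<bar> - 1) / 2"
proof
  txt \<open>The witness lies on the edge of the polytope joining the Wigner vectors of the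
    X- and Y-eigenstates in the quadrant of (x, y).\<close>
  define D where "D = (\<bar>x\<bar> + \<bar>y\<bar> - 1) / 2"
  define ex ey :: real
    where "ex = (if 0 \<le> x then 1 else -1)" and "ey = (if 0 \<le> y then 1 else -1)"
  define t where "t = (1 + \<bar>x\<bar> - \<bar>y\<bar>) / 2"
  have "wigner_of_bloch ex 0 0 \<in> W_free" "wigner_of_bloch 0 ey 0 \<in> W_free"
    unfolding W_free_def wigner_stabilizer_states ex_def ey_def by (auto intro: hull_inc)
  moreover have "0 \<le> t" "t \<le> 1"
    using assms unfolding t_def by auto
  ultimately have "t *\<^sub>R wigner_of_bloch ex 0 0 + (1 - t) *\<^sub>R wigner_of_bloch 0 ey 0 \<in> W_free"
    unfolding W_free_def by (intro convexD convex_convex_hull) auto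
  then show "wigner_of_bloch (t * ex) ((1 - t) * ey) 0 \<in> W_free"
    by (simp add: wigner_of_bloch_affine_combination)
  have diffs: "x - t * ex = ex * D" "y - (1 - t) * ey = ey * D"
    unfolding t_def ex_def ey_def D_def by (auto simp: field_simps)
  have "\<bar>x - t * ex\<bar> = D" "\<bar>y - (1 - t) * ey\<bar> = D"
    unfolding diffs using assms(3) by (simp_all add: abs_mult ex_def ey_def D_def)
  then show "l1norm (wigner_of_bloch x y 0 - wigner_of_bloch (t * ex) ((1 - t) * ey) 0) = D"
    by (simp add: l1norm_wigner_of_bloch_diff)
qed

lemma wigner_distance_equatorial:
  assumes "wigner \<rho> = wigner_of_bloch x y 0" "\<bar>x\<bar> \<le> 1" "\<bar>y\<bar> \<le> 1" "1 \<le> \<bar>x\<bar> + \<bar>y\<bar>"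
  shows "wigner_distance \<rho> = (\<bar>x\<bar> + \<bar>y\<bar> - 1) / 2"
  unfolding wigner_distance_def assms(1)
proof (rule cInf_eq_minimum)
  obtain g where "g \<in> W_free" "l1norm (wigner_of_bloch x y 0 - g) = (\<bar>x\<bar> + \<bar>y\<bar> - 1) / 2"
    using W_free_attains_equatorial_distance assms(2-4) .
  then show "(\<bar>x\<bar> + \<bar>y\<bar> - 1) / 2 \<in> {l1norm (wigner_of_bloch x y 0 - f) |f. f \<in> W_free}"
    by force
  show "\<And>d. d \<in> {l1norm (wigner_of_bloch x y 0 - f) |f. f \<in> W_free}
          \<Longrightarrow> (\<bar>x\<bar> + \<bar>y\<bar> - 1) / 2 \<le> d"
    using l1norm_wigner_of_bloch_minus_W_free_ge by blast
qed

lemma wigner_phase_gate_ketplus: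
  "wigner (proj (phase_gate \<phi> *v ketplus)) = wigner_of_bloch (cos \<phi>) (sin \<phi>) 0"
proof -
  have "phase_gate \<phi> *v ketplus = vector [1 / sqrt 2, cis \<phi> / sqrt 2]"
    unfolding phase_gate_def ketplus_def
    by (simp add: vec_eq_iff forall_2 matrix_vector_mult_def sum_2)
  moreover have
    "1 / complex_of_real (sqrt 2) * cnj (cis \<phi> / complex_of_real (sqrt 2)) = cis (- \<phi>) / 2"
    by (simp add: cis_cnj field_simps flip: of_real_mult)
  ultimately show ?thesis
    by (simp add: wigner_proj_vector norm_divide power_divide)
qed

lemma power2_le_abs:
  fixes x :: real
  assumes "\<bar>x\<bar> \<le> 1"
  shows "x\<^sup>2 \<le> \<bar>x\<bar>"
proof -
  have "x\<^sup>2 = \<bar>x\<bar> * \<bar>x\<bar>"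
    by (simp add: power2_eq_square)
  also have "\<dots> \<le> \<bar>x\<bar>"
    using assms by (intro mult_left_le) simp_all
  finally show ?thesis .
qed

lemma abs_cos_plus_abs_sin_ge_one: "1 \<le> \<bar>cos (\<phi> :: real)\<bar> + \<bar>sin \<phi>\<bar>"
  using power2_le_abs[OF abs_cos_le_one, of \<phi>] power2_le_abs[OF abs_sin_le_one, of \<phi>]
    sin_cos_squared_add[of \<phi>] by argo

theorem lemma1:
  fixes \<phi> :: real
  shows "wigner_distance (proj (phase_gate \<phi> *v ketplus))
           = (\<bar>sin \<phi>\<bar> + \<bar>cos \<phi>\<bar> - 1) / 2"
  using wigner_distance_equatorial[OF wigner_phase_gate_ketplus abs_cos_le_one abs_sin_le_one
      abs_cos_plus_abs_sin_ge_one]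
  by (simp add: add.commute)

end
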